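(* Let $p\in[2,\infty)$. There is a constant $C_p$ such that for all $n,d$ and every real-valued $f:\Omega_n\to\mathbb{R}$ of degree at most $d$, $$\big\||\nabla f|\big\|_{L^p(\Omega_n)}\le C_p\,d\,\|f\|_{L^p(\Omega_n)}.$$
   Context: $\Omega_n=\{-1,1\}^n$ with uniform probability measure. $f$ has degree at most $d$ if $f=\sum_{|S|\le d}\hat f(S)\varepsilon^S$ with $\varepsilon^S=\prod_{i\in S}\varepsilon_i$. $D_jf(\varepsilon)=\frac{f(\varepsilon)-f(\varepsilon^{(j)})}{2}$ with $\varepsilon^{(j)}$ the point $\varepsilon$ with $j$-th coordinate flipped, and $|\nabla f|=\big(\sum_{j=1}^n|D_jf|^2\big)^{1/2}$. *)

theory Defs
  imports "HOL-Analysis.Analysis"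
begin

text \<open>The discrete cube Omega_n = {-1,1}^n, represented by functions nat => real
  that take values in {-1,1} on coordinates 0..n-1 and are fixed to 1 elsewhere.\<close>
definition cube :: "nat \<Rightarrow> (nat \<Rightarrow> real) set" where
  "cube n = {x. (\<forall>i<n. x i = -1 \<or> x i = 1) \<and> (\<forall>i\<ge>n. x i = 1)}"

definition cexp :: "nat \<Rightarrow> ((nat \<Rightarrow> real) \<Rightarrow> real) \<Rightarrow> real" where
  "cexp n g = (\<Sum>x\<in>cube n. g x) / 2 ^ n"

definition Lp_norm :: "nat \<Rightarrow> real \<Rightarrow> ((nat \<Rightarrow> real) \<Rightarrow> real) \<Rightarrow> real" where
  "Lp_norm n p g = (cexp n (\<lambda>x. \<bar>g x\<bar> powr p)) powr (1 / p)"

definition walsh :: "nat set \<Rightarrow> (nat \<Rightarrow> real) \<Rightarrow> real" where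
  "walsh S x = (\<Prod>i\<in>S. x i)"

definition degree_le :: "nat \<Rightarrow> nat \<Rightarrow> ((nat \<Rightarrow> real) \<Rightarrow> real) \<Rightarrow> bool" where
  "degree_le n d f \<longleftrightarrow> (\<exists>c :: nat set \<Rightarrow> real. \<forall>x\<in>cube n.
      f x = (\<Sum>S\<in>{S. S \<subseteq> {..<n} \<and> card S \<le> d}. c S * walsh S x))"

definition flip :: "nat \<Rightarrow> (nat \<Rightarrow> real) \<Rightarrow> (nat \<Rightarrow> real)" where
  "flip j x = x(j := - x j)"

definition Dj :: "nat \<Rightarrow> ((nat \<Rightarrow> real) \<Rightarrow> real) \<Rightarrow> (nat \<Rightarrow> real) \<Rightarrow> real" where
  "Dj j f x = (f x - f (flip j x)) / 2"

definition grad_norm :: "nat \<Rightarrow> ((nat \<Rightarrow> real) \<Rightarrow> real) \<Rightarrow> (nat \<Rightarrow> real) \<Rightarrow> real" where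
  "grad_norm n f x = sqrt (\<Sum>j<n. (Dj j f x)\<^sup>2)"

end

theory Submission
  imports Defs
begin

text \<open>
  For \<open>|r| \<le> 1\<close> let \<open>T\<^sub>r\<close> be the noise operator, the average against the kernel
  \<open>\<Prod>\<^sub>i (1 + r x\<^sub>i \<xi>\<^sub>i) / 2\<close>, so that \<open>T\<^sub>r \<epsilon>\<^sup>S = r\<^bsup>|S|\<^esup> \<epsilon>\<^sup>S\<close>.
  Flipping \<open>x\<^sub>j\<close> changes the kernel by a factor that makes \<open>(1 - r\<^sup>2) D\<^sub>j T\<^sub>r g (x)\<close> equal to
  \<open>r\<close> times the \<open>T\<^sub>r\<close>-average of \<open>g\<close> against \<open>x\<^sub>j (\<xi>\<^sub>j - r x\<^sub>j)\<close>; these centred coordinates are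
  uncorrelated with variance \<open>1 - r\<^sup>2\<close>, so Cauchy-Schwarz gives
  \<open>(1 - r\<^sup>2) |\<nabla>T\<^sub>r g|\<^sup>2 \<le> r\<^sup>2 T\<^sub>r (g\<^sup>2)\<close> for every \<open>g\<close>.

  With the \<open>N = 2d + 2\<close> nodes \<open>\<theta>\<^sub>k = (2k + 1)\<pi> / N\<close> and the weights
  \<open>w\<^sub>k = D\<^sub>d(\<theta>\<^sub>k) / N\<close> (\<open>D\<^sub>d\<close> the Dirichlet kernel) one has \<open>\<Sum>\<^sub>k w\<^sub>k cos(\<theta>\<^sub>k)\<^sup>s = 1\<close> for
  \<open>s \<le> d\<close>, hence \<open>f = \<Sum>\<^sub>k w\<^sub>k T\<^bsub>cos \<theta>\<^sub>k\<^esub> f\<close> whenever \<open>f\<close> has degree at most \<open>d\<close>. Therefore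
  \<open>|\<nabla>f| \<le> \<Sum>\<^sub>k |w\<^sub>k cot \<theta>\<^sub>k| (T\<^bsub>cos \<theta>\<^sub>k\<^esub> f\<^sup>2)\<^bsup>1/2\<^esup>\<close>. As each \<open>T\<^sub>r\<close> is a Markov operator
  preserving the mean, Jensen's inequality (this is where \<open>p \<ge> 2\<close> enters) turns this into
  \<open>\<parallel>|\<nabla>f|\<parallel>\<^sub>p \<le> (\<Sum>\<^sub>k |w\<^sub>k cot \<theta>\<^sub>k|) \<parallel>f\<parallel>\<^sub>p\<close>, and the bound \<open>|D\<^sub>d(t)| \<le> 1 / |sin(t/2)|\<close>
  together with Jordan's inequality gives \<open>\<Sum>\<^sub>k |w\<^sub>k cot \<theta>\<^sub>k| \<le> 12 d\<close>.
\<close>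

lemma convex_on_powr_nonneg:
  assumes p: "p \<ge> 1"
  shows "convex_on {0..} (\<lambda>x::real. x powr p)"
proof (rule convex_on_linorderI)
  fix t x y :: real assume t: "0 < t" "t < 1" and xy: "x \<in> {0..}" "y \<in> {0..}" "x < y"
  show "((1 - t) *\<^sub>R x + t *\<^sub>R y) powr p \<le> (1 - t) * x powr p + t * y powr p"
  proof (cases "x = 0")
    case True
    have "t powr p \<le> t powr 1" using t p by (intro powr_mono') auto
    then have "t powr p * y powr p \<le> t * y powr p" using t by (intro mult_right_mono) auto
    then show ?thesis using True p by (simp add: powr_mult)
  next
    case False
    then show ?thesis using convex_onD[OF powr_convex[OF p], of t x y] t xy by simp
  qed
qed simp

lemma sum_mult_powr_le:
  fixes c y :: "'a \<Rightarrow> real"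
  assumes K: "finite K" and c: "\<And>k. k \<in> K \<Longrightarrow> c k \<ge> 0" and y: "\<And>k. k \<in> K \<Longrightarrow> y k \<ge> 0"
    and p: "p \<ge> 1"
  shows "(\<Sum>k\<in>K. c k * y k) powr p \<le> (\<Sum>k\<in>K. c k) powr (p - 1) * (\<Sum>k\<in>K. c k * y k powr p)"
proof -
  define W where "W = (\<Sum>k\<in>K. c k)"
  have W0: "W \<ge> 0" unfolding W_def using c by (simp add: sum_nonneg)
  show ?thesis
  proof (cases "W = 0")
    case True
    then have "\<forall>k\<in>K. c k = 0" unfolding W_def using sum_nonneg_eq_0_iff[OF K] c by blast
    then show ?thesis using p by simp
  next
    case False
    then have Wp: "W > 0" using W0 by simp
    then have "K \<noteq> {}" unfolding W_def by auto
    moreover have "(\<Sum>k\<in>K. c k / W) = 1"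
      using Wp unfolding W_def by (simp add: sum_divide_distrib[symmetric])
    ultimately have jensen: "(\<Sum>k\<in>K. (c k / W) *\<^sub>R y k) powr p \<le> (\<Sum>k\<in>K. (c k / W) * y k powr p)"
      by (intro convex_on_sum[OF K _ convex_on_powr_nonneg[OF p]]) (use c y Wp in auto)
    have "(\<Sum>k\<in>K. c k * y k) = W * (\<Sum>k\<in>K. (c k / W) *\<^sub>R y k)"
      using Wp by (simp add: sum_distrib_left)
    then have "(\<Sum>k\<in>K. c k * y k) powr p = W powr p * (\<Sum>k\<in>K. (c k / W) *\<^sub>R y k) powr p"
      by (simp add: powr_mult)
    also have "\<dots> \<le> W powr p * (\<Sum>k\<in>K. (c k / W) * y k powr p)"
      using jensen by (intro mult_left_mono) auto
    also have "\<dots> = W powr (p - 1) * (\<Sum>k\<in>K. c k * y k powr p)"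
      using Wp by (simp add: sum_distrib_left sum_divide_distrib powr_diff)
    finally show ?thesis unfolding W_def .
  qed
qed

lemma weighted_Cauchy_Schwarz:
  fixes w f g :: "'a \<Rightarrow> real"
  assumes "\<And>a. a \<in> A \<Longrightarrow> w a \<ge> 0"
  shows "(\<Sum>a\<in>A. w a * f a * g a)\<^sup>2 \<le> (\<Sum>a\<in>A. w a * (f a)\<^sup>2) * (\<Sum>a\<in>A. w a * (g a)\<^sup>2)"
proof -
  have "(\<Sum>a\<in>A. w a * f a * g a) = (\<Sum>a\<in>A. (sqrt (w a) * f a) * (sqrt (w a) * g a))"
    using assms by (intro sum.cong refl) (simp add: mult_ac flip: real_sqrt_mult)
  moreover have "(\<Sum>a\<in>A. w a * (h a)\<^sup>2) = (\<Sum>a\<in>A. (sqrt (w a) * h a)\<^sup>2)" for h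
    using assms by (intro sum.cong refl) (simp add: power_mult_distrib)
  ultimately show ?thesis using Cauchy_Schwarz_ineq_sum by metis
qed

lemma L2_set_sum_le:
  assumes "finite K"
  shows "L2_set (\<lambda>j. \<Sum>k\<in>K. u k j) A \<le> (\<Sum>k\<in>K. L2_set (u k) A)"
  using assms
proof (induction K rule: finite_induct)
  case empty
  then show ?case by (simp add: L2_set_0')
next
  case (insert k K)
  then have "L2_set (\<lambda>j. \<Sum>k\<in>insert k K. u k j) A \<le> L2_set (u k) A + L2_set (\<lambda>j. \<Sum>k\<in>K. u k j) A"
    by (simp add: L2_set_triangle_ineq)
  then show ?case using insert by simp
qed

lemma power2_powr_half: "(x\<^sup>2) powr (p / 2) = \<bar>x\<bar> powr p" for x p :: real
proof (cases "x = 0")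
  case False
  then have "x\<^sup>2 = \<bar>x\<bar> powr 2" by (simp add: powr_realpow)
  then have "(x\<^sup>2) powr (p / 2) = (\<bar>x\<bar> powr 2) powr (p / 2)" by simp
  also have "\<dots> = \<bar>x\<bar> powr (2 * (p / 2))" by (rule powr_powr)
  finally show ?thesis by simp
qed simp

lemma sin_ge_Jordan:
  assumes "0 \<le> x" "x \<le> pi / 2"
  shows "2 * x / pi \<le> sin x"
proof -
  have "convex_on {0..pi} (\<lambda>x. - sin x)"
    by (rule f''_ge0_imp_convex[where f' = "\<lambda>x. - cos x" and f'' = "\<lambda>x. sin x"])
      (auto intro!: derivative_eq_intros simp: sin_ge_zero)
  moreover define t where "t = 2 * x / pi"
  moreover have "0 \<le> t" "t \<le> 1" using assms pi_gt_zero unfolding t_def by (auto simp: field_simps)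
  ultimately have "- sin ((1 - t) *\<^sub>R 0 + t *\<^sub>R (pi / 2)) \<le> (1 - t) * (- sin 0) + t * (- sin (pi / 2))"
    by (intro convex_onD) (auto simp: pi_gt_zero)
  moreover have "(1 - t) *\<^sub>R 0 + t *\<^sub>R (pi / 2) = x" unfolding t_def by simp
  ultimately show ?thesis unfolding t_def by simp
qed

lemma sum_inverse_squares_le: "m \<ge> 1 \<Longrightarrow> (\<Sum>k<m. 1 / (real k + 1)\<^sup>2) \<le> 2 - 1 / real m"
proof (induction m rule: nat_induct_at_least)
  case base
  then show ?case by simp
next
  case (Suc m)
  have m: "real m \<ge> 1" using Suc by simp
  have "1 / (real m + 1)\<^sup>2 \<le> 1 / (real m * (real m + 1))"
    unfolding power2_eq_square using m by (intro frac_le mult_right_mono) auto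
  also have "\<dots> = 1 / real m - 1 / (real m + 1)"
    using m by (simp add: field_simps)
  finally show ?case using Suc by (simp add: add.commute)
qed

lemma sum_inverse_odd_squares_le: "(\<Sum>k<m. 1 / (2 * real k + 1)\<^sup>2) \<le> 2"
proof (cases "m = 0")
  case False
  have "(\<Sum>k<m. 1 / (2 * real k + 1)\<^sup>2) \<le> (\<Sum>k<m. 1 / (real k + 1)\<^sup>2)"
    by (intro sum_mono divide_left_mono power_mono) auto
  also have "\<dots> \<le> 2 - 1 / real m" using sum_inverse_squares_le[of m] False by simp
  also have "\<dots> \<le> 2" by simp
  finally show ?thesis .
qed simp

lemma cube_Suc: "cube (Suc n) = (\<lambda>(\<xi>, e). \<xi>(n := e)) ` (cube n \<times> {-1, 1})"
proof (rule set_eqI, rule iffI)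
  fix y assume y: "y \<in> cube (Suc n)"
  have "y(n := 1) \<in> cube n" "y n \<in> {-1, 1}"
    using y unfolding cube_def by (auto simp: less_Suc_eq)
  moreover have "y = (y(n := 1))(n := y n)" by simp
  ultimately show "y \<in> (\<lambda>(\<xi>, e). \<xi>(n := e)) ` (cube n \<times> {-1, 1})"
    by (metis (no_types, lifting) SigmaI case_prod_conv image_eqI)
next
  fix y assume "y \<in> (\<lambda>(\<xi>, e). \<xi>(n := e)) ` (cube n \<times> {-1, 1})"
  then show "y \<in> cube (Suc n)" unfolding cube_def by (auto simp: less_Suc_eq)
qed

lemma inj_on_cube_Suc: "inj_on (\<lambda>(\<xi>, e). \<xi>(n := e)) (cube n \<times> {-1, 1})"
proof (rule inj_onI, clarify)
  fix a b a' b' assume "a \<in> cube n" "a' \<in> cube n" and eq: "a(n := b) = a'(n := b')"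
  then have "a n = a' n" unfolding cube_def by simp
  with eq show "a = a' \<and> b = b'"
    by (metis fun_upd_idem fun_upd_same fun_upd_upd)
qed

lemma cube_0: "cube 0 = {\<lambda>_. 1}"
  unfolding cube_def by auto

lemma finite_cube: "finite (cube n)"
  by (induction n) (simp_all add: cube_0 cube_Suc)

lemma cube_coord_sq: "\<xi> \<in> cube n \<Longrightarrow> j < n \<Longrightarrow> \<xi> j * \<xi> j = 1"
  unfolding cube_def by auto

lemma cube_coord_abs: "\<xi> \<in> cube n \<Longrightarrow> j < n \<Longrightarrow> \<bar>\<xi> j\<bar> = 1"
  unfolding cube_def by auto

lemma flip_in_cube: "x \<in> cube n \<Longrightarrow> j < n \<Longrightarrow> flip j x \<in> cube n"
  unfolding cube_def flip_def by auto

lemma sum_cube_prod: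
  fixes F :: "nat \<Rightarrow> real \<Rightarrow> real"
  shows "(\<Sum>\<xi>\<in>cube n. \<Prod>i<n. F i (\<xi> i)) = (\<Prod>i<n. F i 1 + F i (-1))"
proof (induction n)
  case 0
  then show ?case by (simp add: cube_0)
next
  case (Suc n)
  have "(\<Sum>\<xi>\<in>cube (Suc n). \<Prod>i<Suc n. F i (\<xi> i))
      = (\<Sum>(\<xi>, e)\<in>cube n \<times> {-1, 1}. \<Prod>i<Suc n. F i ((\<xi>(n := e)) i))"
    unfolding cube_Suc by (subst sum.reindex[OF inj_on_cube_Suc]) (simp add: case_prod_beta)
  also have "\<dots> = (\<Sum>(\<xi>, e)\<in>cube n \<times> {-1, 1}. (\<Prod>i<n. F i (\<xi> i)) * F n e)"
    by (intro sum.cong refl) (auto intro!: prod.cong)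
  also have "\<dots> = (\<Sum>\<xi>\<in>cube n. \<Prod>i<n. F i (\<xi> i)) * (F n 1 + F n (-1))"
    by (simp add: sum.cartesian_product[symmetric] sum.distrib sum_distrib_right
        distrib_left add.commute)
  finally show ?case using Suc by simp
qed

lemma walsh_eq_prod_lessThan:
  assumes "S \<subseteq> {..<n}"
  shows "walsh S \<xi> = (\<Prod>i<n. if i \<in> S then \<xi> i else 1)"
proof -
  have "(\<Prod>i<n. if i \<in> S then \<xi> i else 1) = prod \<xi> ({..<n} \<inter> S)"
    by (simp add: prod.inter_restrict)
  then show ?thesis using assms by (simp add: walsh_def Int_absorb1)
qed

section \<open>The noise operator\<close>

definition noise_kernel :: "nat \<Rightarrow> real \<Rightarrow> (nat \<Rightarrow> real) \<Rightarrow> (nat \<Rightarrow> real) \<Rightarrow> real" where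
  "noise_kernel n r x \<xi> = (\<Prod>i<n. (1 + r * x i * \<xi> i) / 2)"

definition noise_op :: "nat \<Rightarrow> real \<Rightarrow> ((nat \<Rightarrow> real) \<Rightarrow> real) \<Rightarrow> (nat \<Rightarrow> real) \<Rightarrow> real" where
  "noise_op n r g x = (\<Sum>\<xi>\<in>cube n. noise_kernel n r x \<xi> * g \<xi>)"

lemma noise_kernel_commute: "noise_kernel n r x \<xi> = noise_kernel n r \<xi> x"
  unfolding noise_kernel_def by (simp add: mult.commute mult.left_commute)

lemma noise_kernel_nonneg:
  assumes "\<bar>r\<bar> \<le> 1" "x \<in> cube n" "\<xi> \<in> cube n"
  shows "noise_kernel n r x \<xi> \<ge> 0"
  unfolding noise_kernel_def
proof (rule prod_nonneg)
  fix i assume "i \<in> {..<n}"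
  then have "\<bar>r * x i * \<xi> i\<bar> \<le> 1"
    using assms cube_coord_abs by (simp add: abs_mult)
  then show "0 \<le> (1 + r * x i * \<xi> i) / 2" by (simp add: abs_le_iff)
qed

lemma sum_noise_kernel: "(\<Sum>\<xi>\<in>cube n. noise_kernel n r x \<xi>) = 1"
  unfolding noise_kernel_def using sum_cube_prod[of "\<lambda>i e. (1 + r * x i * e) / 2" n]
  by (simp add: field_simps)

lemma sum_noise_kernel_walsh:
  assumes "S \<subseteq> {..<n}"
  shows "(\<Sum>\<xi>\<in>cube n. noise_kernel n r x \<xi> * walsh S \<xi>) = r ^ card S * walsh S x"
proof -
  have "(\<Sum>\<xi>\<in>cube n. noise_kernel n r x \<xi> * walsh S \<xi>)
      = (\<Sum>\<xi>\<in>cube n. \<Prod>i<n. (1 + r * x i * \<xi> i) / 2 * (if i \<in> S then \<xi> i else 1))"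
    unfolding noise_kernel_def walsh_eq_prod_lessThan[OF assms] prod.distrib ..
  also have "\<dots> = (\<Prod>i<n. if i \<in> S then r * x i else 1)"
    by (subst sum_cube_prod) (auto intro!: prod.cong simp: field_simps)
  also have "\<dots> = r ^ card S * walsh S x"
    using assms finite_subset[OF assms]
    by (simp add: walsh_eq_prod_lessThan[OF assms] prod.distrib prod.If_cases Int_absorb1)
  finally show ?thesis .
qed

lemma sum_noise_kernel_centered_products:
  assumes "x \<in> cube n" "j < n" "k < n"
  shows "(\<Sum>\<xi>\<in>cube n. noise_kernel n r x \<xi> * ((\<xi> j - r * x j) * (\<xi> k - r * x k)))
       = (if j = k then 1 - r\<^sup>2 else 0)"
proof -
  let ?E = "\<lambda>h. \<Sum>\<xi>\<in>cube n. noise_kernel n r x \<xi> * h \<xi>"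
  have coord: "?E (\<lambda>\<xi>. \<xi> i) = r * x i" if "i < n" for i
    using sum_noise_kernel_walsh[of "{i}" n r x] that by (simp add: walsh_def)
  have pair: "?E (\<lambda>\<xi>. \<xi> j * \<xi> k) = (if j = k then 1 else r\<^sup>2 * x j * x k)"
  proof (cases "j = k")
    case True
    then show ?thesis
      using sum_noise_kernel[of n r x] cube_coord_sq[of _ n j] assms
      by (simp cong: sum.cong)
  next
    case False
    then show ?thesis
      using sum_noise_kernel_walsh[of "{j, k}" n r x] assms
      by (simp add: walsh_def power2_eq_square)
  qed
  have "?E (\<lambda>\<xi>. (\<xi> j - r * x j) * (\<xi> k - r * x k))
      = ?E (\<lambda>\<xi>. \<xi> j * \<xi> k) - r * x j * ?E (\<lambda>\<xi>. \<xi> k) - r * x k * ?E (\<lambda>\<xi>. \<xi> j)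
        + r * x j * (r * x k) * ?E (\<lambda>_. 1)"
    by (simp add: algebra_simps sum.distrib sum_subtractf sum_distrib_left)
  also have "\<dots> = (if j = k then 1 - r\<^sup>2 else 0)"
    using pair coord[OF assms(2)] coord[OF assms(3)] sum_noise_kernel[of n r x]
      cube_coord_sq[OF assms(1,2)]
    by (auto simp: power2_eq_square algebra_simps)
  finally show ?thesis .
qed

lemma noise_kernel_flip:
  assumes x: "x \<in> cube n" and \<xi>: "\<xi> \<in> cube n" and j: "j < n"
  shows "(1 - r\<^sup>2) * ((noise_kernel n r x \<xi> - noise_kernel n r (flip j x) \<xi>) / 2)
       = r * noise_kernel n r x \<xi> * (x j * (\<xi> j - r * x j))"
proof -
  define R where "R = (\<Prod>i\<in>{..<n} - {j}. (1 + r * x i * \<xi> i) / 2)"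
  define u where "u = x j * \<xi> j"
  have K: "noise_kernel n r x \<xi> = (1 + r * u) / 2 * R"
    unfolding noise_kernel_def R_def u_def using j by (simp add: prod.remove mult.assoc)
  have K_flip: "noise_kernel n r (flip j x) \<xi> = (1 - r * u) / 2 * R"
  proof -
    have "(\<Prod>i\<in>{..<n} - {j}. (1 + r * flip j x i * \<xi> i) / 2) = R"
      unfolding R_def flip_def by (intro prod.cong) auto
    then show ?thesis
      unfolding noise_kernel_def u_def using j by (simp add: prod.remove flip_def mult.assoc)
  qed
  have score: "x j * (\<xi> j - r * x j) = u - r"
    using cube_coord_sq[OF x j] unfolding u_def by (simp add: algebra_simps)
  have "u * u = 1"
    using cube_coord_sq[OF x j] cube_coord_sq[OF \<xi> j] unfolding u_def
    by (metis mult.commute mult.left_commute mult_1_right)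
  have "r * ((1 + r * u) / 2 * R) * (u - r) = r * R / 2 * (u - r + r * (u * u) - r\<^sup>2 * u)"
    by (simp add: field_simps power2_eq_square)
  also have "\<dots> = (1 - r\<^sup>2) * (((1 + r * u) / 2 * R - (1 - r * u) / 2 * R) / 2)"
    unfolding \<open>u * u = 1\<close> by (simp add: field_simps power2_eq_square)
  finally show ?thesis by (simp only: K K_flip score)
qed

lemma noise_op_nonneg:
  assumes "\<bar>r\<bar> \<le> 1" "x \<in> cube n" "\<And>\<xi>. \<xi> \<in> cube n \<Longrightarrow> h \<xi> \<ge> 0"
  shows "noise_op n r h x \<ge> 0"
  unfolding noise_op_def using assms noise_kernel_nonneg by (simp add: sum_nonneg)

lemma noise_op_walsh_expansion:
  assumes "finite I" "\<And>S. S \<in> I \<Longrightarrow> S \<subseteq> {..<n}"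
    and "\<forall>\<xi>\<in>cube n. f \<xi> = (\<Sum>S\<in>I. c S * walsh S \<xi>)"
  shows "noise_op n r f x = (\<Sum>S\<in>I. c S * r ^ card S * walsh S x)"
proof -
  have "noise_op n r f x = (\<Sum>\<xi>\<in>cube n. \<Sum>S\<in>I. c S * (noise_kernel n r x \<xi> * walsh S \<xi>))"
    unfolding noise_op_def using assms(3) by (simp add: sum_distrib_left mult_ac)
  also have "\<dots> = (\<Sum>S\<in>I. c S * (\<Sum>\<xi>\<in>cube n. noise_kernel n r x \<xi> * walsh S \<xi>))"
    by (subst sum.swap) (simp add: sum_distrib_left)
  also have "\<dots> = (\<Sum>S\<in>I. c S * r ^ card S * walsh S x)"
    using assms(2) by (simp add: sum_noise_kernel_walsh mult.assoc)
  finally show ?thesis .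
qed

lemma sum_noise_op: "(\<Sum>x\<in>cube n. noise_op n r h x) = (\<Sum>x\<in>cube n. h x)"
proof -
  have "(\<Sum>x\<in>cube n. noise_op n r h x) = (\<Sum>\<xi>\<in>cube n. (\<Sum>x\<in>cube n. noise_kernel n r \<xi> x) * h \<xi>)"
    unfolding noise_op_def by (subst sum.swap) (simp add: noise_kernel_commute sum_distrib_right)
  then show ?thesis by (simp add: sum_noise_kernel)
qed

lemma noise_op_powr_le:
  assumes "q \<ge> 1" "\<bar>r\<bar> \<le> 1" "x \<in> cube n" "\<And>\<xi>. \<xi> \<in> cube n \<Longrightarrow> h \<xi> \<ge> 0"
  shows "noise_op n r h x powr q \<le> noise_op n r (\<lambda>\<xi>. h \<xi> powr q) x"
proof -
  have "noise_op n r h x powr q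
      \<le> (\<Sum>\<xi>\<in>cube n. noise_kernel n r x \<xi>) powr (q - 1) * noise_op n r (\<lambda>\<xi>. h \<xi> powr q) x"
    unfolding noise_op_def
    by (rule sum_mult_powr_le[OF finite_cube]) (use assms noise_kernel_nonneg in auto)
  then show ?thesis by (simp add: sum_noise_kernel)
qed

lemma sqrt_noise_op_sq_powr_le:
  assumes "p \<ge> 2" "\<bar>r\<bar> \<le> 1" "x \<in> cube n"
  shows "sqrt (noise_op n r (\<lambda>\<xi>. (f \<xi>)\<^sup>2) x) powr p \<le> noise_op n r (\<lambda>\<xi>. \<bar>f \<xi>\<bar> powr p) x"
proof -
  have "sqrt (noise_op n r (\<lambda>\<xi>. (f \<xi>)\<^sup>2) x) powr p = noise_op n r (\<lambda>\<xi>. (f \<xi>)\<^sup>2) x powr (p / 2)"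
    using noise_op_nonneg[OF assms(2,3)] by (simp add: powr_half_sqrt[symmetric] powr_powr)
  also have "\<dots> \<le> noise_op n r (\<lambda>\<xi>. ((f \<xi>)\<^sup>2) powr (p / 2)) x"
    using assms by (intro noise_op_powr_le) auto
  finally show ?thesis by (simp add: power2_powr_half)
qed

section \<open>Gradients of noisy functions\<close>

lemma Dj_sum: "Dj j (\<lambda>y. \<Sum>k\<in>K. w k * h k y) x = (\<Sum>k\<in>K. w k * Dj j (h k) x)"
  unfolding Dj_def by (simp add: right_diff_distrib sum_subtractf flip: sum_divide_distrib)

lemma grad_norm_cong:
  assumes "\<And>y. y \<in> cube n \<Longrightarrow> f y = g y" "x \<in> cube n"
  shows "grad_norm n f x = grad_norm n g x"
  unfolding grad_norm_def Dj_def using assms flip_in_cube by simp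

lemma grad_norm_sum_le:
  assumes "finite K"
  shows "grad_norm n (\<lambda>y. \<Sum>k\<in>K. w k * h k y) x \<le> (\<Sum>k\<in>K. \<bar>w k\<bar> * grad_norm n (h k) x)"
proof -
  have "grad_norm n (\<lambda>y. \<Sum>k\<in>K. w k * h k y) x = L2_set (\<lambda>j. \<Sum>k\<in>K. w k * Dj j (h k) x) {..<n}"
    unfolding grad_norm_def L2_set_def Dj_sum ..
  also have "\<dots> \<le> (\<Sum>k\<in>K. L2_set (\<lambda>j. w k * Dj j (h k) x) {..<n})"
    by (rule L2_set_sum_le[OF assms])
  also have "\<dots> = (\<Sum>k\<in>K. \<bar>w k\<bar> * grad_norm n (h k) x)"
    unfolding grad_norm_def L2_set_def
    by (simp add: power_mult_distrib real_sqrt_mult flip: sum_distrib_left)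
  finally show ?thesis .
qed

lemma Dj_noise_op:
  assumes x: "x \<in> cube n" and j: "j < n"
  shows "(1 - r\<^sup>2) * Dj j (noise_op n r g) x
       = r * (\<Sum>\<xi>\<in>cube n. noise_kernel n r x \<xi> * g \<xi> * (x j * (\<xi> j - r * x j)))"
proof -
  have "Dj j (noise_op n r g) x
      = (\<Sum>\<xi>\<in>cube n. ((noise_kernel n r x \<xi> - noise_kernel n r (flip j x) \<xi>) / 2) * g \<xi>)"
    unfolding Dj_def noise_op_def by (simp add: left_diff_distrib sum_subtractf flip: sum_divide_distrib)
  then have "(1 - r\<^sup>2) * Dj j (noise_op n r g) x
      = (\<Sum>\<xi>\<in>cube n. (1 - r\<^sup>2) * ((noise_kernel n r x \<xi> - noise_kernel n r (flip j x) \<xi>) / 2) * g \<xi>)"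
    by (simp add: sum_distrib_left mult.assoc)
  also have "\<dots> = (\<Sum>\<xi>\<in>cube n. r * noise_kernel n r x \<xi> * (x j * (\<xi> j - r * x j)) * g \<xi>)"
    by (intro sum.cong refl) (simp only: noise_kernel_flip[OF x _ j])
  also have "\<dots> = r * (\<Sum>\<xi>\<in>cube n. noise_kernel n r x \<xi> * g \<xi> * (x j * (\<xi> j - r * x j)))"
    by (simp add: sum_distrib_left mult_ac)
  finally show ?thesis .
qed

lemma sum_noise_kernel_score_sq:
  assumes x: "x \<in> cube n"
  shows "(\<Sum>\<xi>\<in>cube n. noise_kernel n r x \<xi> * (\<Sum>j<n. a j * (x j * (\<xi> j - r * x j)))\<^sup>2)
       = (1 - r\<^sup>2) * (\<Sum>j<n. (a j)\<^sup>2)"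
proof -
  define u where "u \<xi> j = a j * (x j * (\<xi> j - r * x j))" for \<xi> j
  have "(\<Sum>\<xi>\<in>cube n. noise_kernel n r x \<xi> * (\<Sum>j<n. u \<xi> j)\<^sup>2)
      = (\<Sum>\<xi>\<in>cube n. \<Sum>j<n. \<Sum>k<n. noise_kernel n r x \<xi> * (u \<xi> j * u \<xi> k))"
    unfolding power2_eq_square sum_product by (simp add: sum_distrib_left)
  also have "\<dots> = (\<Sum>j<n. \<Sum>k<n. \<Sum>\<xi>\<in>cube n. noise_kernel n r x \<xi> * (u \<xi> j * u \<xi> k))"
    by (subst sum.swap) (simp add: sum.swap[of _ "cube n"])
  also have "\<dots> = (\<Sum>j<n. \<Sum>k<n. (a j * x j * (a k * x k)) *
      (\<Sum>\<xi>\<in>cube n. noise_kernel n r x \<xi> * ((\<xi> j - r * x j) * (\<xi> k - r * x k))))"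
    unfolding u_def sum_distrib_left by (intro sum.cong refl) (simp add: algebra_simps)
  also have "\<dots> = (\<Sum>j<n. \<Sum>k<n. if j = k then a j * x j * (a j * x j) * (1 - r\<^sup>2) else 0)"
    by (intro sum.cong refl) (simp add: sum_noise_kernel_centered_products[OF x])
  also have "\<dots> = (\<Sum>j<n. a j * x j * (a j * x j) * (1 - r\<^sup>2))"
    by simp
  also have "\<dots> = (\<Sum>j<n. (1 - r\<^sup>2) * (a j)\<^sup>2)"
    using cube_coord_sq[OF x]
    by (intro sum.cong refl) (simp add: power2_eq_square algebra_simps)
  finally show ?thesis unfolding u_def by (simp add: sum_distrib_left)
qed

lemma grad_norm_noise_op_sq_le:
  assumes r: "\<bar>r\<bar> \<le> 1" and x: "x \<in> cube n"
  shows "(1 - r\<^sup>2) * (grad_norm n (noise_op n r g) x)\<^sup>2 \<le> r\<^sup>2 * noise_op n r (\<lambda>\<xi>. (g \<xi>)\<^sup>2) x"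
proof -
  define a where "a j = Dj j (noise_op n r g) x" for j
  define \<Psi> where "\<Psi> \<xi> = (\<Sum>j<n. a j * (x j * (\<xi> j - r * x j)))" for \<xi>
  define X where "X = (1 - r\<^sup>2) * (\<Sum>j<n. (a j)\<^sup>2)"
  let ?K = "noise_kernel n r x"
  have K_nonneg: "\<And>\<xi>. \<xi> \<in> cube n \<Longrightarrow> ?K \<xi> \<ge> 0"
    using noise_kernel_nonneg[OF r x] .
  have "X = (\<Sum>j<n. a j * ((1 - r\<^sup>2) * a j))"
    unfolding X_def by (simp add: sum_distrib_left power2_eq_square mult_ac)
  also have "\<dots> = (\<Sum>j<n. a j * (r * (\<Sum>\<xi>\<in>cube n. ?K \<xi> * g \<xi> * (x j * (\<xi> j - r * x j)))))"
    unfolding a_def using x by (intro sum.cong refl) (simp add: Dj_noise_op)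
  also have "\<dots> = r * (\<Sum>\<xi>\<in>cube n. ?K \<xi> * g \<xi> * \<Psi> \<xi>)"
    unfolding \<Psi>_def sum_distrib_left by (subst sum.swap) (simp add: mult_ac)
  finally have X_eq: "X = r * (\<Sum>\<xi>\<in>cube n. ?K \<xi> * g \<xi> * \<Psi> \<xi>)" .
  have "X\<^sup>2 \<le> r\<^sup>2 * ((\<Sum>\<xi>\<in>cube n. ?K \<xi> * (g \<xi>)\<^sup>2) * (\<Sum>\<xi>\<in>cube n. ?K \<xi> * (\<Psi> \<xi>)\<^sup>2))"
    unfolding X_eq power_mult_distrib
    using weighted_Cauchy_Schwarz[of "cube n" ?K g \<Psi>] K_nonneg by (intro mult_left_mono) auto
  also have "\<dots> = X * (r\<^sup>2 * noise_op n r (\<lambda>\<xi>. (g \<xi>)\<^sup>2) x)"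
    unfolding \<Psi>_def sum_noise_kernel_score_sq[OF x] X_def noise_op_def by simp
  finally have "X * X \<le> X * (r\<^sup>2 * noise_op n r (\<lambda>\<xi>. (g \<xi>)\<^sup>2) x)"
    by (simp add: power2_eq_square)
  moreover have "X \<ge> 0"
    unfolding X_def using r by (intro mult_nonneg_nonneg sum_nonneg) (auto simp: abs_square_le_1)
  moreover have "noise_op n r (\<lambda>\<xi>. (g \<xi>)\<^sup>2) x \<ge> 0"
    using noise_op_nonneg[OF r x] by simp
  ultimately have "X \<le> r\<^sup>2 * noise_op n r (\<lambda>\<xi>. (g \<xi>)\<^sup>2) x"
    by (metis mult_le_cancel_left_pos mult_nonneg_nonneg zero_le_power2 order.not_eq_order_implies_strict)
  moreover have "(grad_norm n (noise_op n r g) x)\<^sup>2 = (\<Sum>j<n. (a j)\<^sup>2)"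
    unfolding grad_norm_def a_def by (simp add: sum_nonneg)
  ultimately show ?thesis unfolding X_def by simp
qed

lemma grad_norm_noise_op_cos_le:
  assumes "sin \<theta> \<noteq> 0" "x \<in> cube n"
  shows "grad_norm n (noise_op n (cos \<theta>) g) x
       \<le> \<bar>cot \<theta>\<bar> * sqrt (noise_op n (cos \<theta>) (\<lambda>\<xi>. (g \<xi>)\<^sup>2) x)"
proof -
  let ?G = "noise_op n (cos \<theta>) (\<lambda>\<xi>. (g \<xi>)\<^sup>2) x"
  have "(sin \<theta>)\<^sup>2 * (grad_norm n (noise_op n (cos \<theta>) g) x)\<^sup>2 \<le> (cos \<theta>)\<^sup>2 * ?G"
    using grad_norm_noise_op_sq_le[of "cos \<theta>" x n g] assms by (simp add: sin_squared_eq)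
  then have "(grad_norm n (noise_op n (cos \<theta>) g) x)\<^sup>2 \<le> (cot \<theta>)\<^sup>2 * ?G"
    using assms by (simp add: cot_def power_divide field_simps)
  then have "sqrt ((grad_norm n (noise_op n (cos \<theta>) g) x)\<^sup>2) \<le> sqrt ((cot \<theta>)\<^sup>2 * ?G)"
    by (rule real_sqrt_le_mono)
  then show ?thesis by (simp add: real_sqrt_mult grad_norm_def)
qed

section \<open>A quadrature rule for cosine polynomials\<close>

definition dirichlet_kernel :: "nat \<Rightarrow> real \<Rightarrow> real" where
  "dirichlet_kernel d t = 1 + 2 * (\<Sum>j<d. cos (real (Suc j) * t))"

text \<open>A constant rather than \<open>2 * d + 2\<close>, so that the simplifier does not unroll sums over the nodes.\<close>
definition num_nodes :: "nat \<Rightarrow> nat" where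
  "num_nodes d = 2 * d + 2"

lemma num_nodes_pos: "0 < num_nodes d"
  by (simp add: num_nodes_def)

definition quad_node :: "nat \<Rightarrow> nat \<Rightarrow> real" where
  "quad_node d k = (2 * real k + 1) * pi / num_nodes d"

text \<open>Since \<open>2 d + 2\<close> nodes integrate trigonometric polynomials of degree \<open>< 2 d + 2\<close> exactly,
  convolving with the Dirichlet kernel evaluates a trigonometric polynomial of degree \<open>\<le> d\<close> at \<open>0\<close>.\<close>
definition quad_weight :: "nat \<Rightarrow> nat \<Rightarrow> real" where
  "quad_weight d k = dirichlet_kernel d (quad_node d k) / num_nodes d"

lemma sum_cos_odd_multiples:
  fixes m :: int
  assumes "m \<noteq> 0" "\<bar>m\<bar> < int N"
  shows "(\<Sum>k<N. cos (of_int m * ((2 * real k + 1) * pi / real N))) = 0"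
proof -
  define \<alpha> where "\<alpha> = of_int m * pi / real N"
  have N: "real N > 0" using assms by simp
  have "sin \<alpha> \<noteq> 0"
  proof
    assume "sin \<alpha> = 0"
    then obtain i :: int where "\<alpha> = of_int i * pi" by (auto simp: sin_zero_iff_int2)
    then have "of_int m = of_int i * real N" unfolding \<alpha>_def using N by (simp add: field_simps)
    then have "m = i * int N" by (metis of_int_eq_iff of_int_mult of_int_of_nat_eq)
    with assms show False by (cases "i = 0") (auto simp: abs_mult)
  qed
  have telescope: "2 * sin \<alpha> * cos (of_int m * ((2 * real k + 1) * pi / real N))
      = sin (2 * real (Suc k) * \<alpha>) - sin (2 * real k * \<alpha>)" for k
  proof -
    have "of_int m * ((2 * real k + 1) * pi / real N) = (2 * real k + 1) * \<alpha>"
      unfolding \<alpha>_def by simp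
    moreover have "2 * real (Suc k) * \<alpha> = (2 * real k + 1) * \<alpha> + \<alpha>"
      "2 * real k * \<alpha> = (2 * real k + 1) * \<alpha> - \<alpha>" by (simp_all add: algebra_simps)
    ultimately show ?thesis by (simp add: sin_add sin_diff)
  qed
  have "2 * sin \<alpha> * (\<Sum>k<N. cos (of_int m * ((2 * real k + 1) * pi / real N)))
      = sin (2 * real N * \<alpha>) - sin (2 * real 0 * \<alpha>)"
    unfolding sum_distrib_left telescope by (rule sum_lessThan_telescope)
  also have "\<dots> = 0"
  proof -
    have "2 * real N * \<alpha> = of_int (2 * m) * pi"
      unfolding \<alpha>_def using N by simp
    then have "sin (2 * real N * \<alpha>) = 0"
      unfolding sin_zero_iff_int2 by blast
    then show ?thesis by simp
  qed
  finally show ?thesis using \<open>sin \<alpha> \<noteq> 0\<close> by simp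
qed

lemma sum_cos_quad_node:
  fixes m :: int
  assumes "\<bar>m\<bar> < int (num_nodes d)"
  shows "(\<Sum>k<num_nodes d. cos (of_int m * quad_node d k)) = (if m = 0 then real (num_nodes d) else 0)"
  using sum_cos_odd_multiples[of m "num_nodes d"] assms unfolding quad_node_def by auto

lemma sum_quad_weight_cos:
  assumes "m \<le> d"
  shows "(\<Sum>k<num_nodes d. quad_weight d k * cos (real m * quad_node d k)) = 1"
proof -
  let ?S = "\<lambda>i::int. \<Sum>k<num_nodes d. cos (of_int i * quad_node d k)"
  have "2 * cos (real (Suc j) * t) * cos (real m * t)
      = cos (of_int (int (Suc j) - int m) * t) + cos (of_int (int (Suc j) + int m) * t)" for j t
  proof -
    have "of_int (int (Suc j) - int m) * t = real (Suc j) * t - real m * t"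
      "of_int (int (Suc j) + int m) * t = real (Suc j) * t + real m * t"
      by (simp_all add: algebra_simps)
    then show ?thesis by (simp add: cos_add cos_diff)
  qed
  note product = this
  have "(\<Sum>k<num_nodes d. dirichlet_kernel d (quad_node d k) * cos (real m * quad_node d k))
      = (\<Sum>k<num_nodes d. cos (real m * quad_node d k)
          + (\<Sum>j<d. 2 * cos (real (Suc j) * quad_node d k) * cos (real m * quad_node d k)))"
    unfolding dirichlet_kernel_def distrib_right mult_1_left sum_distrib_left sum_distrib_right ..
  also have "\<dots> = ?S (int m) + (\<Sum>j<d. ?S (int (Suc j) - int m) + ?S (int (Suc j) + int m))"
    unfolding product
    by (simp only: sum.distrib sum.swap[of _ "{..<num_nodes d}" "{..<d}"] of_int_of_nat_eq)
  also have "\<dots> = (if m = 0 then real (num_nodes d) else 0)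
      + (\<Sum>j<d. if Suc j = m then real (num_nodes d) else 0)"
  proof -
    have N: "int (num_nodes d) = 2 * int d + 2" by (simp add: num_nodes_def)
    have "?S (int m) = (if m = 0 then real (num_nodes d) else 0)"
      using sum_cos_quad_node[of "int m" d] assms N by simp
    moreover have "?S (int (Suc j) - int m) = (if Suc j = m then real (num_nodes d) else 0)" if "j < d" for j
      using sum_cos_quad_node[of "int (Suc j) - int m" d] assms N that by auto
    moreover have "?S (int (Suc j) + int m) = 0" if "j < d" for j
      using sum_cos_quad_node[of "int (Suc j) + int m" d] assms N that by simp
    ultimately show ?thesis by simp
  qed
  also have "\<dots> = real (num_nodes d)"
    using assms by (cases m) (simp_all add: Suc_le_eq)
  finally show ?thesis
    unfolding quad_weight_def using num_nodes_pos[of d] by (simp add: field_simps flip: sum_divide_distrib)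
qed

lemma sum_quad_weight_cos_power_cos:
  "s + m \<le> d \<Longrightarrow> (\<Sum>k<num_nodes d. quad_weight d k * cos (quad_node d k) ^ s * cos (real m * quad_node d k)) = 1"
proof (induction s arbitrary: m)
  case 0
  then show ?case using sum_quad_weight_cos by simp
next
  case (Suc s)
  have up: "(\<Sum>k<num_nodes d. quad_weight d k * cos (quad_node d k) ^ s * cos (real (Suc m) * quad_node d k)) = 1"
    using Suc.IH[of "Suc m"] Suc.prems by simp
  show ?case
  proof (cases m)
    case 0
    then show ?thesis using up by (simp add: mult_ac)
  next
    case (Suc m')
    have down: "(\<Sum>k<num_nodes d. quad_weight d k * cos (quad_node d k) ^ s * cos (real m' * quad_node d k)) = 1"
      using Suc.IH[of m'] Suc.prems Suc by simp
    have "cos t * cos (real m * t) = (cos (real (Suc m) * t) + cos (real m' * t)) / 2" for t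
    proof -
      have "cos (real (Suc m) * t) = cos (real m * t + t)" "cos (real m' * t) = cos (real m * t - t)"
        using Suc by (simp_all add: algebra_simps)
      then show ?thesis by (simp add: cos_add cos_diff)
    qed
    note product = this
    have "(\<Sum>k<num_nodes d. quad_weight d k * cos (quad_node d k) ^ Suc s * cos (real m * quad_node d k))
      = (\<Sum>k<num_nodes d. quad_weight d k * cos (quad_node d k) ^ s
          * (cos (quad_node d k) * cos (real m * quad_node d k)))"
      by (simp add: mult_ac)
    also have "\<dots> = (\<Sum>k<num_nodes d. (quad_weight d k * cos (quad_node d k) ^ s * cos (real (Suc m) * quad_node d k)
          + quad_weight d k * cos (quad_node d k) ^ s * cos (real m' * quad_node d k)) / 2)"
      unfolding product by (simp add: field_simps)
    also have "\<dots> = 1"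
      using up down by (simp add: sum.distrib flip: sum_divide_distrib)
    finally show ?thesis .
  qed
qed

lemma sum_quad_weight_cos_power:
  "s \<le> d \<Longrightarrow> (\<Sum>k<num_nodes d. quad_weight d k * cos (quad_node d k) ^ s) = 1"
  using sum_quad_weight_cos_power_cos[of s 0 d] by simp

lemma sin_half_mult_dirichlet_kernel:
  "sin (t / 2) * dirichlet_kernel d t = sin ((real d + 1 / 2) * t)"
proof -
  define F where "F j = sin ((real j + 1 / 2) * t)" for j :: nat
  have step: "2 * sin (t / 2) * cos (real (Suc j) * t) = F (Suc j) - F j" for j
  proof -
    have "F (Suc j) = sin (real (Suc j) * t + t / 2)" "F j = sin (real (Suc j) * t - t / 2)"
      unfolding F_def by (simp_all add: algebra_simps)
    then show ?thesis by (simp add: sin_add sin_diff)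
  qed
  have "sin (t / 2) * dirichlet_kernel d t = sin (t / 2) + (\<Sum>j<d. 2 * sin (t / 2) * cos (real (Suc j) * t))"
    unfolding dirichlet_kernel_def by (simp add: algebra_simps sum_distrib_left)
  also have "\<dots> = sin (t / 2) + (F d - F 0)"
    unfolding step by (simp only: sum_lessThan_telescope)
  finally show ?thesis unfolding F_def by simp
qed

lemma abs_dirichlet_kernel_le:
  assumes "sin (t / 2) \<noteq> 0"
  shows "\<bar>dirichlet_kernel d t\<bar> \<le> 1 / \<bar>sin (t / 2)\<bar>"
proof -
  have "\<bar>sin (t / 2)\<bar> * \<bar>dirichlet_kernel d t\<bar> \<le> 1"
    unfolding abs_mult[symmetric] sin_half_mult_dirichlet_kernel by simp
  then show ?thesis using assms by (simp add: field_simps)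
qed

lemma abs_dirichlet_kernel_mult_cot_le:
  assumes "sin (t / 2) \<noteq> 0" "cos (t / 2) \<noteq> 0"
  shows "\<bar>dirichlet_kernel d t * cot t\<bar> \<le> 1 / (2 * (sin (t / 2))\<^sup>2 * \<bar>cos (t / 2)\<bar>)"
proof -
  have sin_t: "\<bar>sin t\<bar> = 2 * \<bar>sin (t / 2)\<bar> * \<bar>cos (t / 2)\<bar>"
    using sin_double[of "t / 2"] by (simp add: abs_mult)
  have "\<bar>cot t\<bar> \<le> 1 / (2 * \<bar>sin (t / 2)\<bar> * \<bar>cos (t / 2)\<bar>)"
    unfolding cot_def abs_divide sin_t using assms by (simp add: divide_right_mono)
  then have "\<bar>dirichlet_kernel d t * cot t\<bar> \<le> 1 / \<bar>sin (t / 2)\<bar> * (1 / (2 * \<bar>sin (t / 2)\<bar> * \<bar>cos (t / 2)\<bar>))"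
    unfolding abs_mult by (intro mult_mono abs_dirichlet_kernel_le assms) auto
  then show ?thesis by (simp add: power2_eq_square mult_ac)
qed

lemma sin_cos_Jordan_bound:
  fixes a N :: real
  assumes a: "1 \<le> a" "1 \<le> N - a"
  defines "\<psi> \<equiv> a * pi / (2 * N)"
  shows "0 < sin \<psi>" "0 < cos \<psi>" "1 / (2 * N * (sin \<psi>)\<^sup>2 * cos \<psi>) \<le> 1 + N / (2 * a\<^sup>2)"
proof -
  have N: "N \<ge> 2" using a by simp
  have \<psi>: "0 \<le> \<psi>" "\<psi> \<le> pi / 2" unfolding \<psi>_def using a N by (simp_all add: field_simps)
  have sin_ge: "a / N \<le> sin \<psi>"
    using sin_ge_Jordan[OF \<psi>] unfolding \<psi>_def using N by (simp add: field_simps)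
  have cos_ge: "(N - a) / N \<le> cos \<psi>"
  proof -
    have "2 * (pi / 2 - \<psi>) / pi = (N - a) / N"
      unfolding \<psi>_def using N by (simp add: field_simps)
    then show ?thesis using sin_ge_Jordan[of "pi / 2 - \<psi>"] \<psi> by (simp add: sin_cos_eq)
  qed
  have pos: "0 < a / N" "0 < (N - a) / N" using a N by simp_all
  then show "0 < sin \<psi>" "0 < cos \<psi>" using sin_ge cos_ge by linarith+
  have "2 * a\<^sup>2 * (N - a) / N\<^sup>2 = 2 * N * (a / N)\<^sup>2 * ((N - a) / N)"
    using N by (simp add: field_simps power2_eq_square)
  also have "\<dots> \<le> 2 * N * (sin \<psi>)\<^sup>2 * cos \<psi>"
    using sin_ge cos_ge pos N by (intro mult_mono mult_left_mono power_mono) auto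
  finally have low: "2 * a\<^sup>2 * (N - a) / N\<^sup>2 \<le> 2 * N * (sin \<psi>)\<^sup>2 * cos \<psi>" .
  have "1 / (2 * N * (sin \<psi>)\<^sup>2 * cos \<psi>) \<le> 1 / (2 * a\<^sup>2 * (N - a) / N\<^sup>2)"
    using a low by (intro frac_le) simp_all
  also have "\<dots> = N\<^sup>2 / (2 * a\<^sup>2 * (N - a))"
    by simp
  also have "\<dots> \<le> 1 + N / (2 * a\<^sup>2)"
  proof -
    have "(a - 1) * (N - a - 1) \<ge> 0" using a by simp
    then have "N \<le> 2 * a * (N - a)" using a by (simp add: algebra_simps)
    then have "N * a \<le> 2 * a\<^sup>2 * (N - a)"
      using mult_left_mono[of N "2 * a * (N - a)" a] a by (simp add: power2_eq_square algebra_simps)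
    moreover have "(1 + N / (2 * a\<^sup>2)) * (2 * a\<^sup>2 * (N - a)) = 2 * a\<^sup>2 * (N - a) + N * (N - a)"
      using a by (simp add: field_simps)
    ultimately have "N\<^sup>2 \<le> (1 + N / (2 * a\<^sup>2)) * (2 * a\<^sup>2 * (N - a))"
      by (simp add: power2_eq_square algebra_simps)
    then show ?thesis using a by (simp add: divide_le_eq)
  qed
  finally show "1 / (2 * N * (sin \<psi>)\<^sup>2 * cos \<psi>) \<le> 1 + N / (2 * a\<^sup>2)" .
qed

lemma quad_node_half_angle:
  assumes k: "k < num_nodes d"
  defines "N \<equiv> real (num_nodes d)"
  obtains b where "b = 2 * real k + 1 \<or> b = 2 * N - (2 * real k + 1)" "1 \<le> b" "1 \<le> N - b"
    and "\<bar>sin (quad_node d k / 2)\<bar> = sin (b * pi / (2 * N))"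
    and "\<bar>cos (quad_node d k / 2)\<bar> = cos (b * pi / (2 * N))"
proof -
  define a where "a = 2 * real k + 1"
  have N: "N > 0" unfolding N_def using num_nodes_pos[of d] by simp
  have half: "quad_node d k / 2 = a * pi / (2 * N)"
    unfolding quad_node_def a_def N_def by simp
  show ?thesis
  proof (cases "2 * k + 1 < num_nodes d")
    case True
    then have "1 \<le> a" "1 \<le> N - a" unfolding a_def N_def num_nodes_def by simp_all
    then show ?thesis
      using sin_cos_Jordan_bound[of a N] by (intro that[of a]) (simp_all add: half a_def)
  next
    case False
    then have "num_nodes d < 2 * k + 1" unfolding num_nodes_def by presburger
    then have bounds: "1 \<le> 2 * N - a" "1 \<le> N - (2 * N - a)"
      using k unfolding a_def N_def by linarith+
    define y where "y = (2 * N - a) * pi / (2 * N)"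
    have reflect: "quad_node d k / 2 = pi - y"
      unfolding half y_def using N by (simp add: field_simps)
    have sin_eq: "sin (quad_node d k / 2) = sin y"
      unfolding reflect by (rule sin_pi_minus)
    have cos_eq: "cos (quad_node d k / 2) = - cos y"
      unfolding reflect by (rule cos_pi_minus)
    have "0 < sin y" "0 < cos y"
      using sin_cos_Jordan_bound(1,2)[OF bounds] unfolding y_def .
    show ?thesis
    proof (rule that[of "2 * N - a"])
      show "\<bar>sin (quad_node d k / 2)\<bar> = sin ((2 * N - a) * pi / (2 * N))"
        unfolding y_def[symmetric] sin_eq using \<open>0 < sin y\<close> by simp
      show "\<bar>cos (quad_node d k / 2)\<bar> = cos ((2 * N - a) * pi / (2 * N))"
        unfolding y_def[symmetric] cos_eq using \<open>0 < cos y\<close> by simp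
    qed (use bounds in \<open>simp_all add: a_def\<close>)
  qed
qed

lemma quad_node_bound:
  assumes k: "k < num_nodes d"
  defines "N \<equiv> real (num_nodes d)"
  shows "sin (quad_node d k) \<noteq> 0"
    and "\<bar>quad_weight d k * cot (quad_node d k)\<bar>
      \<le> 1 + N / (2 * (2 * real k + 1)\<^sup>2) + N / (2 * (2 * N - (2 * real k + 1))\<^sup>2)"
proof -
  have N: "N > 0" unfolding N_def using num_nodes_pos[of d] by simp
  obtain b where b: "b = 2 * real k + 1 \<or> b = 2 * N - (2 * real k + 1)" "1 \<le> b" "1 \<le> N - b"
    and sin_half: "\<bar>sin (quad_node d k / 2)\<bar> = sin (b * pi / (2 * N))"
    and cos_half: "\<bar>cos (quad_node d k / 2)\<bar> = cos (b * pi / (2 * N))"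
    using quad_node_half_angle[OF k] unfolding N_def by blast
  note Jordan = sin_cos_Jordan_bound[OF b(2,3)]
  have "sin (quad_node d k / 2) \<noteq> 0" "cos (quad_node d k / 2) \<noteq> 0"
    using sin_half cos_half Jordan(1,2) by auto
  then show "sin (quad_node d k) \<noteq> 0"
    using sin_double[of "quad_node d k / 2"] by simp
  have "\<bar>quad_weight d k * cot (quad_node d k)\<bar>
      = \<bar>dirichlet_kernel d (quad_node d k) * cot (quad_node d k)\<bar> / N"
    unfolding quad_weight_def N_def by (simp add: abs_mult)
  also have "\<dots> \<le> 1 / (2 * (sin (quad_node d k / 2))\<^sup>2 * \<bar>cos (quad_node d k / 2)\<bar>) / N"
    using \<open>sin (quad_node d k / 2) \<noteq> 0\<close> \<open>cos (quad_node d k / 2) \<noteq> 0\<close> N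
    by (intro divide_right_mono abs_dirichlet_kernel_mult_cot_le) auto
  also have "\<dots> = 1 / (2 * N * (sin (b * pi / (2 * N)))\<^sup>2 * cos (b * pi / (2 * N)))"
  proof -
    have "(sin (quad_node d k / 2))\<^sup>2 = (sin (b * pi / (2 * N)))\<^sup>2"
      using sin_half power2_abs by metis
    then show ?thesis unfolding cos_half by (simp add: mult_ac)
  qed
  also have "\<dots> \<le> 1 + N / (2 * b\<^sup>2)"
    by (rule Jordan(3))
  also have "\<dots> \<le> 1 + N / (2 * (2 * real k + 1)\<^sup>2) + N / (2 * (2 * N - (2 * real k + 1))\<^sup>2)"
  proof -
    have "0 \<le> N / (2 * (2 * real k + 1)\<^sup>2)" "0 \<le> N / (2 * (2 * N - (2 * real k + 1))\<^sup>2)"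
      using N by simp_all
    with b(1) show ?thesis by (elim disjE) simp_all
  qed
  finally show "\<bar>quad_weight d k * cot (quad_node d k)\<bar>
      \<le> 1 + N / (2 * (2 * real k + 1)\<^sup>2) + N / (2 * (2 * N - (2 * real k + 1))\<^sup>2)" .
qed

lemma sum_abs_quad_weight_cot_le:
  "(\<Sum>k<num_nodes d. \<bar>quad_weight d k * cot (quad_node d k)\<bar>) \<le> 12 * real d"
proof (cases "d = 0")
  case True
  have "cos (quad_node 0 k) = 0" for k
    unfolding cos_zero_iff_int quad_node_def num_nodes_def
    by (rule exI[of _ "2 * int k + 1"]) (simp add: field_simps)
  then show ?thesis using True by (simp add: cot_def)
next
  case False
  define M where "M = num_nodes d"
  define N where "N = real M"
  define Q where "Q = (\<Sum>k<M. 1 / (2 * real k + 1)\<^sup>2)"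
  have "(\<Sum>k<M. \<bar>quad_weight d k * cot (quad_node d k)\<bar>)
      \<le> (\<Sum>k<M. 1 + N / (2 * (2 * real k + 1)\<^sup>2) + N / (2 * (2 * N - (2 * real k + 1))\<^sup>2))"
    unfolding M_def N_def by (intro sum_mono quad_node_bound(2)) auto
  also have "\<dots> = N + N / 2 * Q + N / 2 * (\<Sum>k<M. 1 / (2 * N - (2 * real k + 1))\<^sup>2)"
    unfolding Q_def N_def by (simp add: sum.distrib sum_distrib_left)
  also have "(\<Sum>k<M. 1 / (2 * N - (2 * real k + 1))\<^sup>2) = (\<Sum>k<M. 1 / (2 * real (M - Suc k) + 1)\<^sup>2)"
    by (intro sum.cong refl) (auto simp: N_def of_nat_diff)
  also have "\<dots> = Q"
    unfolding Q_def by (rule sum.nat_diff_reindex)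
  also have "N + N / 2 * Q + N / 2 * Q \<le> 3 * N"
  proof -
    have "N * Q \<le> N * 2"
      using sum_inverse_odd_squares_le[of M] unfolding Q_def N_def by (intro mult_left_mono) auto
    then show ?thesis by simp
  qed
  also have "\<dots> \<le> 12 * real d"
    using False unfolding N_def M_def num_nodes_def by simp
  finally show ?thesis unfolding M_def .
qed

section \<open>From pointwise to L^p bounds\<close>

lemma Lp_norm_nonneg: "Lp_norm n p f \<ge> 0"
  unfolding Lp_norm_def by simp

lemma Lp_norm_le_of_sum_powr_le:
  assumes p: "p > 0" and W: "W \<ge> 0"
    and le: "(\<Sum>x\<in>cube n. \<bar>g x\<bar> powr p) \<le> W powr p * (\<Sum>x\<in>cube n. \<bar>f x\<bar> powr p)"
  shows "Lp_norm n p g \<le> W * Lp_norm n p f"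
proof -
  have "Lp_norm n p g \<le> (W powr p * cexp n (\<lambda>x. \<bar>f x\<bar> powr p)) powr (1 / p)"
    unfolding Lp_norm_def cexp_def using le p
    by (intro powr_mono2) (auto intro!: sum_nonneg divide_right_mono divide_nonneg_pos)
  also have "\<dots> = W * Lp_norm n p f"
    unfolding Lp_norm_def using p W by (simp add: powr_mult powr_powr)
  finally show ?thesis .
qed

lemma Lp_norm_le_of_noise_domination:
  assumes p: "p \<ge> 2" and K: "finite K"
    and c: "\<And>k. k \<in> K \<Longrightarrow> c k \<ge> 0" and r: "\<And>k. k \<in> K \<Longrightarrow> \<bar>r k\<bar> \<le> 1"
    and G: "\<And>x. x \<in> cube n \<Longrightarrow> 0 \<le> G x"
    and dom: "\<And>x. x \<in> cube n \<Longrightarrow> G x \<le> (\<Sum>k\<in>K. c k * sqrt (noise_op n (r k) (\<lambda>\<xi>. (f \<xi>)\<^sup>2) x))"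
  shows "Lp_norm n p G \<le> (\<Sum>k\<in>K. c k) * Lp_norm n p f"
proof (rule Lp_norm_le_of_sum_powr_le)
  define W where "W = (\<Sum>k\<in>K. c k)"
  have "W \<ge> 0" unfolding W_def using c by (simp add: sum_nonneg)
  let ?T = "\<lambda>k. noise_op n (r k) (\<lambda>\<xi>. \<bar>f \<xi>\<bar> powr p)"
  have pointwise: "\<bar>G x\<bar> powr p \<le> W powr (p - 1) * (\<Sum>k\<in>K. c k * ?T k x)" if x: "x \<in> cube n" for x
  proof -
    have "\<bar>G x\<bar> powr p \<le> (\<Sum>k\<in>K. c k * sqrt (noise_op n (r k) (\<lambda>\<xi>. (f \<xi>)\<^sup>2) x)) powr p"
      using G[OF x] dom[OF x] p by (intro powr_mono2) auto
    also have "\<dots> \<le> W powr (p - 1) * (\<Sum>k\<in>K. c k * sqrt (noise_op n (r k) (\<lambda>\<xi>. (f \<xi>)\<^sup>2) x) powr p)"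
      unfolding W_def using K c p r x by (intro sum_mult_powr_le) (auto intro!: noise_op_nonneg)
    also have "\<dots> \<le> W powr (p - 1) * (\<Sum>k\<in>K. c k * ?T k x)"
      using c r p x by (intro mult_left_mono sum_mono sqrt_noise_op_sq_powr_le) auto
    finally show ?thesis .
  qed
  have "(\<Sum>x\<in>cube n. \<bar>G x\<bar> powr p) \<le> (\<Sum>x\<in>cube n. W powr (p - 1) * (\<Sum>k\<in>K. c k * ?T k x))"
    by (intro sum_mono pointwise)
  also have "\<dots> = W powr (p - 1) * (\<Sum>k\<in>K. c k * (\<Sum>x\<in>cube n. ?T k x))"
    by (simp add: sum_distrib_left sum.swap[of _ "cube n" K] mult_ac)
  also have "\<dots> = W powr (p - 1) * W * (\<Sum>x\<in>cube n. \<bar>f x\<bar> powr p)"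
    unfolding sum_noise_op W_def by (simp add: sum_distrib_right)
  also have "W powr (p - 1) * W = W powr p"
    using \<open>W \<ge> 0\<close> p by (cases "W = 0") (simp_all add: powr_diff)
  finally show "(\<Sum>x\<in>cube n. \<bar>G x\<bar> powr p) \<le> (\<Sum>k\<in>K. c k) powr p * (\<Sum>x\<in>cube n. \<bar>f x\<bar> powr p)"
    unfolding W_def .
qed (use p c in \<open>auto intro: sum_nonneg\<close>)

lemma degree_le_quadrature:
  assumes "degree_le n d f" "y \<in> cube n"
  shows "f y = (\<Sum>k<num_nodes d. quad_weight d k * noise_op n (cos (quad_node d k)) f y)"
proof -
  define I where "I = {S. S \<subseteq> {..<n} \<and> card S \<le> d}"
  obtain c where c: "\<forall>x\<in>cube n. f x = (\<Sum>S\<in>I. c S * walsh S x)"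
    using assms(1) unfolding degree_le_def I_def by blast
  have I: "finite I" "\<And>S. S \<in> I \<Longrightarrow> S \<subseteq> {..<n}"
    unfolding I_def by (auto intro: finite_subset[of _ "Pow {..<n}"])
  have "(\<Sum>k<num_nodes d. quad_weight d k * noise_op n (cos (quad_node d k)) f y)
      = (\<Sum>S\<in>I. c S * walsh S y * (\<Sum>k<num_nodes d. quad_weight d k * cos (quad_node d k) ^ card S))"
    using noise_op_walsh_expansion[OF I c]
    by (simp add: sum_distrib_left mult_ac sum.swap[of _ "{..<num_nodes d}" I])
  also have "\<dots> = f y"
    using c assms(2) sum_quad_weight_cos_power by (simp add: I_def)
  finally show ?thesis ..
qed

lemma grad_norm_le_quadrature:
  assumes "degree_le n d f" "x \<in> cube n"
  shows "grad_norm n f x \<le> (\<Sum>k<num_nodes d. \<bar>quad_weight d k * cot (quad_node d k)\<bar>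
      * sqrt (noise_op n (cos (quad_node d k)) (\<lambda>\<xi>. (f \<xi>)\<^sup>2) x))"
proof -
  let ?T = "\<lambda>k. noise_op n (cos (quad_node d k))"
  have "grad_norm n f x = grad_norm n (\<lambda>y. \<Sum>k<num_nodes d. quad_weight d k * ?T k f y) x"
    using degree_le_quadrature[OF assms(1)] assms(2) by (rule grad_norm_cong)
  also have "\<dots> \<le> (\<Sum>k<num_nodes d. \<bar>quad_weight d k\<bar> * grad_norm n (?T k f) x)"
    by (rule grad_norm_sum_le) simp
  also have "\<dots> \<le> (\<Sum>k<num_nodes d. \<bar>quad_weight d k\<bar>
      * (\<bar>cot (quad_node d k)\<bar> * sqrt (?T k (\<lambda>\<xi>. (f \<xi>)\<^sup>2) x)))"
    using assms(2) quad_node_bound(1)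
    by (intro sum_mono mult_left_mono grad_norm_noise_op_cos_le) auto
  finally show ?thesis by (simp add: abs_mult mult_ac)
qed

theorem mainTheorem7:
  fixes p :: real
  assumes "p \<ge> 2"
  shows "\<exists>C::real. \<forall>(n::nat) (d::nat) (f::(nat \<Rightarrow> real) \<Rightarrow> real).
           degree_le n d f \<longrightarrow> Lp_norm n p (grad_norm n f) \<le> C * real d * Lp_norm n p f"
proof (intro exI allI impI)
  fix n d f
  assume deg: "degree_le n d f"
  have "Lp_norm n p (grad_norm n f) \<le> (\<Sum>k<num_nodes d. \<bar>quad_weight d k * cot (quad_node d k)\<bar>) * Lp_norm n p f"
  proof (rule Lp_norm_le_of_noise_domination[where r = "\<lambda>k. cos (quad_node d k)"])
    show "grad_norm n f x \<le> (\<Sum>k<num_nodes d. \<bar>quad_weight d k * cot (quad_node d k)\<bar>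
        * sqrt (noise_op n (cos (quad_node d k)) (\<lambda>\<xi>. (f \<xi>)\<^sup>2) x))" if "x \<in> cube n" for x
      using grad_norm_le_quadrature[OF deg that] .
  qed (use assms in \<open>auto simp: grad_norm_def sum_nonneg\<close>)
  also have "\<dots> \<le> 12 * real d * Lp_norm n p f"
    by (intro mult_right_mono sum_abs_quad_weight_cot_le Lp_norm_nonneg)
  finally show "Lp_norm n p (grad_norm n f) \<le> 12 * real d * Lp_norm n p f" .
qed

end
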